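(* Let $n,k$ be integers with $2\le k\le n/2$. If $n$ and $k-1$ are coprime, then every Gutkin $(n,k)$-gon is equiangular.
   Context: Let $P$ be a convex $n$-gon in the Euclidean plane with vertices $v_0,\dots,v_{n-1}$ in their cyclic (counterclockwise) order, indices taken modulo $n$. $P$ is a Gutkin $(n,k)$-gon if there exists an angle $\alpha$ such that for every $i$, $\angle v_{i+1}v_iv_{i+k}=\angle v_{i+k-1}v_{i+k}v_i=\alpha$, where $\angle abc$ denotes the angle at $b$ between the segments $ba$ and $bc$. Equiangular means all interior angles are equal. *)

theory Defs
  imports "HOL-Analysis.Analysis"
begin

definition angle_at :: "complex \<Rightarrow> complex \<Rightarrow> complex \<Rightarrow> real" where
  "angle_at a b c = arccos (inner (a - b) (c - b) / (norm (a - b) * norm (c - b)))"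

definition cross2 :: "complex \<Rightarrow> complex \<Rightarrow> real" where
  "cross2 u w = Im (cnj u * w)"

text \<open>A polygon with vertices v 0, ..., v (n-1) (indices mod n) is a convex n-gon with
  vertices in counterclockwise order: n \<ge> 3 and every vertex not on an edge lies strictly
  to the left of that (directed) edge.\<close>
definition convex_ngon :: "nat \<Rightarrow> (nat \<Rightarrow> complex) \<Rightarrow> bool" where
  "convex_ngon n v \<longleftrightarrow> n \<ge> 3 \<and>
     (\<forall>i<n. \<forall>j<n. j \<noteq> i \<and> j \<noteq> (i + 1) mod n \<longrightarrow>
        cross2 (v ((i + 1) mod n) - v i) (v j - v i) > 0)"

definition gutkin :: "nat \<Rightarrow> nat \<Rightarrow> (nat \<Rightarrow> complex) \<Rightarrow> bool" where
  "gutkin n k v \<longleftrightarrow> convex_ngon n v \<and> (\<exists>\<alpha>. \<forall>i<n.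
      angle_at (v ((i + 1) mod n)) (v i) (v ((i + k) mod n)) = \<alpha> \<and>
      angle_at (v ((i + k - 1) mod n)) (v ((i + k) mod n)) (v i) = \<alpha>)"

definition interior_angle :: "nat \<Rightarrow> (nat \<Rightarrow> complex) \<Rightarrow> nat \<Rightarrow> real" where
  "interior_angle n v i = angle_at (v ((i + n - 1) mod n)) (v (i mod n)) (v ((i + 1) mod n))"

definition equiangular :: "nat \<Rightarrow> (nat \<Rightarrow> complex) \<Rightarrow> bool" where
  "equiangular n v \<longleftrightarrow> (\<forall>i<n. \<forall>j<n. interior_angle n v i = interior_angle n v j)"

end

theory Submission
  imports Defs
begin

text \<open>Let \<open>u i\<close> be the unit direction of the edge from \<open>v i\<close> to \<open>v (i + 1)\<close>. At either end of
  the diagonal from \<open>v i\<close> to \<open>v (i + k)\<close> the Gutkin condition fixes the angle between the diagonal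
  and an edge, and convexity fixes the orientation of that angle. So the diagonal has direction
  \<open>u i \<cdot> e\<^sup>i\<^sup>\<alpha>\<close> and also \<open>u (i + k - 1) \<cdot> e\<^sup>-\<^sup>i\<^sup>\<alpha>\<close>, whence \<open>u (i + k - 1) = u i \<cdot> e\<^sup>2\<^sup>i\<^sup>\<alpha>\<close>. The
  turning \<open>u (i + 1) / u i\<close>, which determines the interior angle at \<open>v (i + 1)\<close>, is therefore
  periodic with period \<open>k - 1\<close> as well as \<open>n\<close>, hence constant when \<open>n\<close> and \<open>k - 1\<close> are coprime.\<close>

lemma cnj_sgn_mult: "cnj (sgn a) * sgn b = cnj a * b / complex_of_real (cmod a * cmod b)"
  by (simp add: sgn_eq)

lemma Re_cnj_sgn_mult: "Re (cnj (sgn a) * sgn b) = inner a b / (norm a * norm b)"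
  unfolding cnj_sgn_mult by (simp add: inner_complex_def Re_divide_of_real)

lemma Im_cnj_sgn_mult: "Im (cnj (sgn a) * sgn b) = cross2 a b / (norm a * norm b)"
  unfolding cnj_sgn_mult cross2_def by (simp add: Im_divide_of_real)

lemma unit_complex_eqI:
  fixes p q :: complex
  assumes "cmod p = 1" "cmod q = 1" "Re p = Re q" "Im p \<ge> 0" "Im q \<ge> 0"
  shows "p = q"
proof -
  have "Re p ^ 2 + Im p ^ 2 = Re q ^ 2 + Im q ^ 2"
    using assms(1,2) by (simp add: cmod_def)
  then have "Im p = Im q"
    using assms(3-5) by (simp add: power2_eq_iff_nonneg)
  with assms(3) show ?thesis
    by (simp add: complex_eq_iff)
qed

lemma sgn_eq_rotate_by_angle:
  assumes "cross2 u w > 0"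
  shows "sgn w = sgn u * cis (arccos (inner u w / (norm u * norm w)))"
proof -
  define x where "x = inner u w / (norm u * norm w)"
  have "u \<noteq> 0" "w \<noteq> 0"
    using assms by (auto simp: cross2_def)
  then have unit: "cmod (cnj (sgn u) * sgn w) = 1" "cmod (sgn u) = 1"
    by (simp_all add: norm_mult norm_sgn)
  have Re_eq: "Re (cnj (sgn u) * sgn w) = x"
    unfolding x_def by (rule Re_cnj_sgn_mult)
  have "Im (cnj (sgn u) * sgn w) > 0"
    using assms \<open>u \<noteq> 0\<close> \<open>w \<noteq> 0\<close> unfolding Im_cnj_sgn_mult by simp
  moreover have "\<bar>x\<bar> \<le> 1"
    using unit(1) abs_Re_le_cmod[of "cnj (sgn u) * sgn w"] unfolding Re_eq by simp
  ultimately have "cnj (sgn u) * sgn w = cis (arccos x)"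
    using unit(1) by (intro unit_complex_eqI) (simp_all only: Re_eq cis.sel norm_cis
      cos_arccos_abs sin_arccos_abs real_sqrt_ge_zero abs_square_le_1 less_imp_le diff_ge_0_iff_ge)
  then have "sgn u * (cnj (sgn u) * sgn w) = sgn u * cis (arccos x)"
    by simp
  moreover have "sgn u * cnj (sgn u) = 1"
    using unit(2) by (simp add: complex_mult_cnj cmod_def power2_eq_square)
  ultimately show ?thesis
    unfolding x_def by (simp add: mult.assoc [symmetric])
qed

lemma sgn_diff_eq_rotate_angle_at:
  assumes "cross2 (a - b) (c - b) > 0"
  shows "sgn (c - b) = sgn (a - b) * cis (angle_at a b c)"
  using sgn_eq_rotate_by_angle [OF assms] unfolding angle_at_def .

lemma sgn_diff_eq_rotate_neg_angle_at:
  assumes "cross2 (a - b) (c - b) < 0"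
  shows "sgn (c - b) = sgn (a - b) * cis (- angle_at a b c)"
proof -
  have "cross2 (c - b) (a - b) > 0"
    using assms by (simp add: cross2_def algebra_simps)
  then have "sgn (a - b) = sgn (c - b) * cis (angle_at c b a)"
    by (rule sgn_diff_eq_rotate_angle_at)
  moreover have "angle_at c b a = angle_at a b c"
    unfolding angle_at_def by (simp add: inner_commute mult.commute)
  ultimately have "sgn (a - b) * cis (- angle_at a b c) = sgn (c - b) * cis 0"
    by (simp add: mult.assoc cis_mult)
  then show ?thesis
    by simp
qed

lemma periodic_coprime_const:
  fixes f :: "nat \<Rightarrow> 'a"
  assumes period_n: "\<And>j. f (j + n) = f j"
    and period_m: "\<And>j. f (j + m) = f j"
    and "coprime n m"
  shows "f j = f 0"
proof -
  have multiple_n: "f (j + n * y) = f j" for j y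
  proof (induction y)
    case (Suc y)
    then show ?case
      using period_n [of "j + n * y"] by (simp add: ac_simps)
  qed simp
  have multiple_m: "f (j + m * x) = f j" for j x
  proof (induction x)
    case (Suc x)
    then show ?case
      using period_m [of "j + m * x"] by (simp add: ac_simps)
  qed simp
  have step: "f (Suc j) = f j" for j
  proof (cases "m = 0")
    case True
    then have "n = 1"
      using \<open>coprime n m\<close> by simp
    then show ?thesis
      using period_n by simp
  next
    case False
    then obtain x y where "m * x = n * y + 1"
      using bezout_nat [of m n] \<open>coprime n m\<close> by (auto simp: coprime_iff_gcd_eq_1 gcd.commute)
    then have "f (j + 1) = f (j + m * x)"
      using multiple_n [of "j + 1" y] by (simp add: add.assoc)
    then show ?thesis
      by (simp add: multiple_m)
  qed
  show ?thesis
    by (induction j) (simp_all add: step)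
qed

lemma add_mod_neq_self:
  fixes i m n :: nat
  assumes "i < n" "0 < m" "m < n"
  shows "(i + m) mod n \<noteq> i"
  using assms by (auto simp: mod_if)

definition polygon_edge :: "nat \<Rightarrow> (nat \<Rightarrow> complex) \<Rightarrow> nat \<Rightarrow> complex" where
  "polygon_edge n v i = v ((i + 1) mod n) - v (i mod n)"

definition polygon_turn :: "nat \<Rightarrow> (nat \<Rightarrow> complex) \<Rightarrow> nat \<Rightarrow> complex" where
  "polygon_turn n v i = sgn (polygon_edge n v (i + 1)) * cnj (sgn (polygon_edge n v i))"

lemma polygon_turn_add_period: "polygon_turn n v (i + n) = polygon_turn n v i"
  by (simp add: polygon_turn_def polygon_edge_def flip: add_Suc)

lemma interior_angle_eq_turn:
  assumes "0 < n"
  shows "interior_angle n v i = arccos (- Re (polygon_turn n v (i + n - 1)))"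
proof -
  have "i + n - 1 + 1 = i + n"
    using assms by simp
  then have incoming: "polygon_edge n v (i + n - 1) = v (i mod n) - v ((i + n - 1) mod n)"
    and outgoing: "polygon_edge n v (i + n - 1 + 1) = v ((i + 1) mod n) - v (i mod n)"
    by (simp_all add: polygon_edge_def flip: add_Suc)
  have "Re (polygon_turn n v (i + n - 1)) =
      inner (v (i mod n) - v ((i + n - 1) mod n)) (v ((i + 1) mod n) - v (i mod n)) /
      (norm (v (i mod n) - v ((i + n - 1) mod n)) * norm (v ((i + 1) mod n) - v (i mod n)))"
    unfolding polygon_turn_def incoming outgoing
    by (subst mult.commute) (rule Re_cnj_sgn_mult)
  then show ?thesis
    unfolding interior_angle_def angle_at_def
    by (simp add: inner_diff_left norm_minus_commute [of "v (i mod n)"] minus_divide_left)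
qed

lemma gutkin_edge_rotation:
  assumes "gutkin n k v" "2 \<le> k" "k < n"
  obtains \<alpha> where
    "\<And>i. sgn (polygon_edge n v (i + (k - 1))) = sgn (polygon_edge n v i) * cis (2 * \<alpha>)"
proof -
  obtain \<alpha> where convex: "convex_ngon n v" and angles: "\<forall>i<n.
      angle_at (v ((i + 1) mod n)) (v i) (v ((i + k) mod n)) = \<alpha> \<and>
      angle_at (v ((i + k - 1) mod n)) (v ((i + k) mod n)) (v i) = \<alpha>"
    using assms(1) unfolding gutkin_def by blast
  have left_of_edge: "cross2 (v ((a + 1) mod n) - v a) (v j - v a) > 0"
    if "a < n" "j < n" "j \<noteq> a" "j \<noteq> (a + 1) mod n" for a j
    using convex that unfolding convex_ngon_def by blast
  define m where "m = k - 1"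
  have k: "k = m + 1" "0 < m" "m + 1 < n"
    using assms(2,3) by (simp_all add: m_def)
  have "sgn (polygon_edge n v (i + m)) = sgn (polygon_edge n v i) * cis (2 * \<alpha>)" for i
  proof -
    define r where "r = i mod n"
    define s where "s = (r + 1) mod n"
    define p where "p = (r + m) mod n"
    define q where "q = (r + (m + 1)) mod n"
    have "r < n" "s < n" "p < n" "q < n"
      using k by (simp_all add: r_def s_def p_def q_def)
    have q_alt: "q = (s + m) mod n" "q = (p + 1) mod n"
      by (simp_all add: q_def s_def p_def mod_add_left_eq mod_Suc_eq)
    have "q \<noteq> r" "q \<noteq> s" "p \<noteq> r"
      using add_mod_neq_self [OF \<open>r < n\<close>, of "m + 1"] add_mod_neq_self [OF \<open>s < n\<close>, of m]
        add_mod_neq_self [OF \<open>r < n\<close>, of m] k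
      by (simp_all add: q_def q_alt(1) [symmetric] p_def)
    have "s = (i + 1) mod n" "p = (i + m) mod n" "q = (i + (m + 1)) mod n"
      unfolding s_def p_def q_def r_def by (rule mod_add_left_eq)+
    then have edges: "polygon_edge n v i = v s - v r" "polygon_edge n v (i + m) = v q - v p"
      by (simp_all add: polygon_edge_def r_def add.assoc)
    have "cross2 (v s - v r) (v q - v r) > 0"
      using left_of_edge [OF \<open>r < n\<close> \<open>q < n\<close> \<open>q \<noteq> r\<close>] \<open>q \<noteq> s\<close> by (simp add: s_def)
    moreover have "cross2 (v q - v p) (v r - v p) > 0"
      using left_of_edge [OF \<open>p < n\<close> \<open>r < n\<close> \<open>p \<noteq> r\<close> [symmetric]] \<open>q \<noteq> r\<close>
      by (simp add: q_alt(2))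
    ultimately have "cross2 (v s - v r) (v q - v r) > 0" "cross2 (v p - v q) (v r - v q) < 0"
      by (simp_all add: cross2_def algebra_simps)
    moreover have "angle_at (v s) (v r) (v q) = \<alpha>" "angle_at (v p) (v q) (v r) = \<alpha>"
      using angles \<open>r < n\<close> k(1) by (simp_all add: s_def q_def p_def)
    ultimately have toward_q: "sgn (v q - v r) = sgn (v s - v r) * cis \<alpha>"
      and away_from_q: "sgn (v r - v q) = sgn (v p - v q) * cis (- \<alpha>)"
      using sgn_diff_eq_rotate_angle_at sgn_diff_eq_rotate_neg_angle_at by metis+
    have "sgn (v q - v r) = sgn (v q - v p) * cis (- \<alpha>)"
      using away_from_q by (metis minus_diff_eq sgn_minus mult_minus_left)
    then have "sgn (v q - v p) = sgn (v q - v r) * cis \<alpha>"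
      by (simp add: mult.assoc cis_mult)
    then show ?thesis
      unfolding edges toward_q by (simp add: mult.assoc cis_mult)
  qed
  then show ?thesis
    using that unfolding m_def by blast
qed

lemma gutkin_turn_periodic:
  assumes "gutkin n k v" "2 \<le> k" "k < n"
  shows "polygon_turn n v (i + (k - 1)) = polygon_turn n v i"
proof -
  obtain \<alpha> where rotation:
    "\<And>i. sgn (polygon_edge n v (i + (k - 1))) = sgn (polygon_edge n v i) * cis (2 * \<alpha>)"
    using gutkin_edge_rotation [OF assms] by blast
  have "polygon_turn n v (i + (k - 1)) =
      sgn (polygon_edge n v (i + 1 + (k - 1))) * cnj (sgn (polygon_edge n v (i + (k - 1))))"
    by (simp add: polygon_turn_def add.commute add.left_commute)
  also have "\<dots> = polygon_turn n v i * (cis (2 * \<alpha>) * cnj (cis (2 * \<alpha>)))"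
    unfolding rotation polygon_turn_def by (simp add: ac_simps)
  also have "cis (2 * \<alpha>) * cnj (cis (2 * \<alpha>)) = 1"
    by (simp add: cis_cnj cis_mult)
  finally show ?thesis
    by simp
qed

theorem mainTheorem10:
  fixes n k :: nat and v :: "nat \<Rightarrow> complex"
  assumes "2 \<le> k" and "2 * k \<le> n"
    and "coprime n (k - 1)"
    and "gutkin n k v"
  shows "equiangular n v"
proof -
  have "k < n" "0 < n"
    using assms(1,2) by simp_all
  have turn_const: "polygon_turn n v j = polygon_turn n v 0" for j
    using periodic_coprime_const [OF polygon_turn_add_period
        gutkin_turn_periodic [OF assms(4,1) \<open>k < n\<close>] assms(3)] .
  have "interior_angle n v i = arccos (- Re (polygon_turn n v 0))" for i
    using interior_angle_eq_turn [OF \<open>0 < n\<close>, of v i] turn_const [of "i + n - 1"] by simp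
  then show ?thesis
    unfolding equiangular_def by simp
qed

end
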